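(* Let $X_1,\dots,X_N$ and $\sigma_1,\dots,\sigma_N$ be as in the context, and let $\widetilde{\mathcal H}$, $M_k,A_k,D_k$ and $\eta_k$ be as defined there. Let $R$ be a positive integer, let $\varepsilon\colon\{1,\dots,R\}\to\{1,*\}$ and $\iota\colon\{1,\dots,R\}\to\{1,\dots,N\}$ with $\iota(1)=\iota(R)=k$. Let $\pi\in NC(R)$ satisfy: (i) $\pi\in NC_{\mathrm{irr}}(R)$; (ii) for every block $B=(q_1<q_2<\dots<q_r)$ of $\pi$, $\iota(q_1)=\dots=\iota(q_r)$ and $\varepsilon(q_1)\ne\varepsilon(q_2)\ne\dots\ne\varepsilon(q_r)\ne\varepsilon(q_1)$. Define $\varphi_\pi\colon\{1,\dots,R\}\to\mathcal L(\widetilde{\mathcal H})$ by: $\varphi_\pi(j)=M_{\iota(j)}^{\varepsilon(j)}$ for $j\in\{1,R\}$; for $2\le j\le R-1$ with $\varepsilon(j)=1$, $\varphi_\pi(j)=D_{\iota(j)}$ if $j$ is the least element of its block of $\pi$, $A^*_{\iota(j)}$ if $j$ is the greatest element of its block, and $M_{\iota(j)}$ otherwise; for $2\le j\le R-1$ with $\varepsilon(j)=*$, $\varphi_\pi(j)=A_{\iota(j)}$ if $j$ is the least element of its block, $D^*_{\iota(j)}$ if $j$ is the greatest element of its block, and $M^*_{\iota(j)}$ otherwise. Then $$\kappa_\pi[X_{\iota(1)}^{\varepsilon(1)},\dots,X_{\iota(R)}^{\varepsilon(R)}]=\langle\varphi_\pi(1)\cdots\varphi_\pi(R)\eta_k,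\eta_k\rangle.$$
   Context: $(\mathcal M,\tau)$ is a tracial $W^*$-probability space, $X_1,\dots,X_N\in\mathcal M$ are $*$-free (bounded) $R$-diagonal elements, and $\sigma_1,\dots,\sigma_N$ are compactly supported symmetric finite positive Borel measures on $\mathbf{R}$ such that for every $k$, every $r\ge1$ and every cyclically alternating $\varepsilon(1),\dots,\varepsilon(r)\in\{1,*\}$ (i.e. $\varepsilon(j)\ne\varepsilon(j+1)$ and $\varepsilon(r)\ne\varepsilon(1)$), the free cumulant satisfies $\kappa_r(X_k^{\varepsilon(1)},\dots,X_k^{\varepsilon(r)})=\int t^r\,d\sigma_k(t)$. Here $X^1=X$, $X^*$ is the adjoint, $\kappa_n$ are free cumulants w.r.t. $\tau$ and $\kappa_\pi$ is the multiplicative extension over the blocks of $\pi$. $NC(R)$ is the set of noncrossing partitions of $\{1,\dots,R\}$, $NC_{\mathrm{irr}}(R)$ those in which $1$ and $R$ lie in the same block. Fock model: let $\{e,f\}$ be an orthonormal basis of $\mathbf{C}^2$, $H_k^e=L^2(\sigma_k)\otimes\mathbf{C}e$, $H_k^f=L^2(\sigma_k)\otimes\mathbf{C}f$, $\mathcal H=\bigoplus_{k=1}^N(H_k^e\oplus H_k^f)$, $\widetilde{\mathcal H}=\bigoplus_{n\ge1}\mathcal H^{\otimes n}$ (no vacuum), with inner product $\langle\cdot,\cdot\rangle$. Let $\mathrm{id}_k\in L^2(\sigma_k)$ be $t\mapsto t$ and $1_k$ the constant function $1$; $m_k\colon H_k^e\to H_k^f$, $m_k(F\otimes e)=(\mathrm{id}_k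 F)\otimes f$. For $v_1,\dots,v_n\in\mathcal H$: $M_k(v_1\otimes\cdots\otimes v_n)=m_k(P_{H_k^e}v_1)\otimes v_2\otimes\cdots\otimes v_n$ (so $M_k^*(v_1\otimes\cdots\otimes v_n)=m_k^*(P_{H_k^f}v_1)\otimes v_2\otimes\cdots\otimes v_n$), $A_k^*(v_1\otimes\cdots\otimes v_n)=(\mathrm{id}_k\otimes f)\otimes v_1\otimes\cdots\otimes v_n$, $D_k^*(v_1\otimes\cdots\otimes v_n)=(\mathrm{id}_k\otimes e)\otimes v_1\otimes\cdots\otimes v_n$; their adjoints are $A_k(v_1\otimes\cdots\otimes v_n)=\langle v_1,\mathrm{id}_k\otimes f\rangle v_2\otimes\cdots\otimes v_n$, $D_k(v_1\otimes\cdots\otimes v_n)=\langle v_1,\mathrm{id}_k\otimes e\rangle v_2\otimes\cdots\otimes v_n$ for $n\ge2$, and $A_kv=D_kv=0$ for $v\in\mathcal H$. Here $P_{H}$ is orthogonal projection onto $H$. For an operator $Z$, $Z^1=Z$ and $Z^*$ is its adjoint. $\eta_k=1_k\otimes e+1_k\otimes f\in\mathcal H$. *)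

theory Defs
  imports "HOL-Analysis.Analysis" "HOL-Library.Disjoint_Sets"
begin

definition NC :: "nat \<Rightarrow> nat set set \<Rightarrow> bool" where
  "NC n \<pi> \<longleftrightarrow> partition_on {1..n} \<pi> \<and>
     (\<forall>B\<in>\<pi>. \<forall>B'\<in>\<pi>. B \<noteq> B' \<longrightarrow>
        \<not> (\<exists>a b c d. a < b \<and> b < c \<and> c < d \<and> a \<in> B \<and> c \<in> B \<and> b \<in> B' \<and> d \<in> B'))"

definition NC_irr :: "nat \<Rightarrow> nat set set \<Rightarrow> bool" where
  "NC_irr n \<pi> \<longleftrightarrow> NC n \<pi> \<and> (\<exists>B\<in>\<pi>. 1 \<in> B \<and> n \<in> B)"

definition blk :: "nat set set \<Rightarrow> nat \<Rightarrow> nat set" where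
  "blk \<pi> j = (THE B. B \<in> \<pi> \<and> j \<in> B)"

datatype epsilon = EOne | EStar

definition Xpow :: "('a \<Rightarrow> 'a) \<Rightarrow> 'a \<Rightarrow> epsilon \<Rightarrow> 'a" where
  "Xpow st x e = (case e of EOne \<Rightarrow> x | EStar \<Rightarrow> st x)"

definition cyc_alt :: "epsilon list \<Rightarrow> bool" where
  "cyc_alt es \<longleftrightarrow> (\<forall>i<length es. es ! i \<noteq> es ! ((i + 1) mod length es))"

text \<open>A complex *-algebra is modelled as a unital ring 'a together with a central
  unital embedding sc of the scalars and an involution st; tau is a faithful
  positive tracial state.\<close>
definition tracial_star_prob_space ::
  "(complex \<Rightarrow> 'a::ring_1) \<Rightarrow> ('a \<Rightarrow> 'a) \<Rightarrow> ('a \<Rightarrow> complex) \<Rightarrow> bool" where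
  "tracial_star_prob_space sc st \<tau> \<longleftrightarrow>
     (\<forall>a b. sc (a + b) = sc a + sc b) \<and> (\<forall>a b. sc (a * b) = sc a * sc b) \<and> sc 1 = 1 \<and>
     (\<forall>c x. sc c * x = x * sc c) \<and>
     (\<forall>x. st (st x) = x) \<and> (\<forall>x y. st (x + y) = st x + st y) \<and>
     (\<forall>x y. st (x * y) = st y * st x) \<and> (\<forall>c. st (sc c) = sc (cnj c)) \<and>
     (\<forall>x y. \<tau> (x + y) = \<tau> x + \<tau> y) \<and> (\<forall>c x. \<tau> (sc c * x) = c * \<tau> x) \<and> \<tau> 1 = 1 \<and>
     (\<forall>x y. \<tau> (x * y) = \<tau> (y * x)) \<and>
     (\<forall>x. Im (\<tau> (st x * x)) = 0 \<and> Re (\<tau> (st x * x)) \<ge> 0) \<and>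
     (\<forall>x. \<tau> (st x * x) = 0 \<longrightarrow> x = 0)"

inductive_set salg for sc :: "complex \<Rightarrow> 'a::ring_1" and st :: "'a \<Rightarrow> 'a" and x :: 'a where
  scal: "sc c \<in> salg sc st x"
| gen: "x \<in> salg sc st x"
| genst: "st x \<in> salg sc st x"
| add: "a \<in> salg sc st x \<Longrightarrow> b \<in> salg sc st x \<Longrightarrow> a + b \<in> salg sc st x"
| mult: "a \<in> salg sc st x \<Longrightarrow> b \<in> salg sc st x \<Longrightarrow> a * b \<in> salg sc st x"

definition star_free ::
  "(complex \<Rightarrow> 'a::ring_1) \<Rightarrow> ('a \<Rightarrow> 'a) \<Rightarrow> ('a \<Rightarrow> complex) \<Rightarrow> nat \<Rightarrow> (nat \<Rightarrow> 'a) \<Rightarrow> bool" where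
  "star_free sc st \<tau> N X \<longleftrightarrow>
     (\<forall>is as. length is = length as \<and> is \<noteq> [] \<and>
        (\<forall>j<length is. is ! j \<in> {1..N} \<and> as ! j \<in> salg sc st (X (is ! j)) \<and> \<tau> (as ! j) = 0) \<and>
        (\<forall>j. Suc j < length is \<longrightarrow> is ! j \<noteq> is ! Suc j)
        \<longrightarrow> \<tau> (prod_list as) = 0)"

definition kappa_pi :: "('a list \<Rightarrow> complex) \<Rightarrow> nat set set \<Rightarrow> (nat \<Rightarrow> 'a) \<Rightarrow> complex" where
  "kappa_pi \<kappa> \<pi> x = (\<Prod>B\<in>\<pi>. \<kappa> (map x (sorted_list_of_set B)))"

text \<open>kappa is the family of free cumulants of tau: the moment-cumulant formula
  (which determines kappa on nonempty lists uniquely)\<close>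
definition free_cumulants :: "('a::monoid_mult \<Rightarrow> complex) \<Rightarrow> ('a list \<Rightarrow> complex) \<Rightarrow> bool" where
  "free_cumulants \<tau> \<kappa> \<longleftrightarrow>
     (\<forall>xs. xs \<noteq> [] \<longrightarrow>
        \<tau> (prod_list xs) = (\<Sum>\<pi>\<in>{\<pi>. NC (length xs) \<pi>}. kappa_pi \<kappa> \<pi> (\<lambda>j. xs ! (j - 1))))"

definition R_diagonal :: "('a \<Rightarrow> 'a) \<Rightarrow> ('a list \<Rightarrow> complex) \<Rightarrow> 'a \<Rightarrow> bool" where
  "R_diagonal st \<kappa> x \<longleftrightarrow>
     (\<forall>es. es \<noteq> [] \<and> \<not> cyc_alt es \<longrightarrow> \<kappa> (map (Xpow st x) es) = 0)"

datatype col = Ce | Cf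

text \<open>A letter (k, c, F) stands for the vector F \<otimes> c in H_k^c = L^2(sigma_k) \<otimes> C c.
  Vectors of the Fock space (without vacuum) are represented as finite formal
  linear combinations of elementary tensors v_1 \<otimes> ... \<otimes> v_n (n \<ge> 1).\<close>
type_synonym letter = "nat \<times> col \<times> (real \<Rightarrow> complex)"
type_synonym word = "letter list"
type_synonym fvec = "(complex \<times> word) list"

definition linner :: "(nat \<Rightarrow> real measure) \<Rightarrow> letter \<Rightarrow> letter \<Rightarrow> complex" where
  "linner \<sigma> v w = (case v of (k, c, F) \<Rightarrow> case w of (k', c', G) \<Rightarrow>
      if k = k' \<and> c = c' then (LINT t|\<sigma> k. F t * cnj (G t)) else 0)"

definition winner :: "(nat \<Rightarrow> real measure) \<Rightarrow> word \<Rightarrow> word \<Rightarrow> complex" where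
  "winner \<sigma> u w = (if length u = length w then (\<Prod>(a, b)\<leftarrow>zip u w. linner \<sigma> a b) else 0)"

definition finner :: "(nat \<Rightarrow> real measure) \<Rightarrow> fvec \<Rightarrow> fvec \<Rightarrow> complex" where
  "finner \<sigma> v w = sum_list [a * cnj b * winner \<sigma> u u'. (a, u) \<leftarrow> v, (b, u') \<leftarrow> w]"

definition app :: "(word \<Rightarrow> fvec) \<Rightarrow> fvec \<Rightarrow> fvec" where
  "app T v = concat (map (\<lambda>(a, u). map (\<lambda>(b, u'). (a * b, u')) (T u)) v)"

definition idf :: "real \<Rightarrow> complex" where "idf t = complex_of_real t"

fun opM :: "nat \<Rightarrow> word \<Rightarrow> fvec" where
  "opM k [] = []"
| "opM k ((k', c, F) # vs) =
     (if k' = k \<and> c = Ce then [(1, (k, Cf, \<lambda>t. idf t * F t) # vs)] else [])"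

fun opMstar :: "nat \<Rightarrow> word \<Rightarrow> fvec" where
  "opMstar k [] = []"
| "opMstar k ((k', c, F) # vs) =
     (if k' = k \<and> c = Cf then [(1, (k, Ce, \<lambda>t. idf t * F t) # vs)] else [])"

definition opAstar :: "nat \<Rightarrow> word \<Rightarrow> fvec" where
  "opAstar k w = [(1, (k, Cf, idf) # w)]"

definition opDstar :: "nat \<Rightarrow> word \<Rightarrow> fvec" where
  "opDstar k w = [(1, (k, Ce, idf) # w)]"

fun opA :: "(nat \<Rightarrow> real measure) \<Rightarrow> nat \<Rightarrow> word \<Rightarrow> fvec" where
  "opA \<sigma> k [] = []"
| "opA \<sigma> k (v # vs) = (if vs = [] then [] else [(linner \<sigma> v (k, Cf, idf), vs)])"

fun opD :: "(nat \<Rightarrow> real measure) \<Rightarrow> nat \<Rightarrow> word \<Rightarrow> fvec" where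
  "opD \<sigma> k [] = []"
| "opD \<sigma> k (v # vs) = (if vs = [] then [] else [(linner \<sigma> v (k, Ce, idf), vs)])"

definition eta :: "nat \<Rightarrow> fvec" where
  "eta k = [(1, [(k, Ce, \<lambda>_. 1)]), (1, [(k, Cf, \<lambda>_. 1)])]"

definition phi :: "(nat \<Rightarrow> real measure) \<Rightarrow> nat \<Rightarrow> (nat \<Rightarrow> epsilon) \<Rightarrow> (nat \<Rightarrow> nat)
    \<Rightarrow> nat set set \<Rightarrow> nat \<Rightarrow> word \<Rightarrow> fvec" where
  "phi \<sigma> R \<epsilon> \<iota> \<pi> j =
     (if j = 1 \<or> j = R then (if \<epsilon> j = EOne then opM (\<iota> j) else opMstar (\<iota> j))
      else if \<epsilon> j = EOne then
        (if j = Min (blk \<pi> j) then opD \<sigma> (\<iota> j)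
         else if j = Max (blk \<pi> j) then opAstar (\<iota> j) else opM (\<iota> j))
      else
        (if j = Min (blk \<pi> j) then opA \<sigma> (\<iota> j)
         else if j = Max (blk \<pi> j) then opDstar (\<iota> j) else opMstar (\<iota> j)))"

definition phi_prod :: "(nat \<Rightarrow> real measure) \<Rightarrow> nat \<Rightarrow> (nat \<Rightarrow> epsilon) \<Rightarrow> (nat \<Rightarrow> nat)
    \<Rightarrow> nat set set \<Rightarrow> fvec \<Rightarrow> fvec" where
  "phi_prod \<sigma> R \<epsilon> \<iota> \<pi> v = foldr (\<lambda>j w. app (phi \<sigma> R \<epsilon> \<iota> \<pi> j) w) [1..<R+1] v"

end

theory Submission
  imports Defs
begin

(*
  Both sides factor over the blocks of pi. On the left, a block B is a cyclically alternating
  word in a single X_k, so its cumulant is the moment of order |B| of sigma_k.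
  On the right, apply phi(R), ..., phi(1) to eta_k in turn. After phi(j) ... phi(R) the vector is
  one elementary tensor times the product of the moments of the blocks contained in {j..R}.
  The tensor has one factor for each block B meeting both {1..j-1} and {j..R}, namely t^m (x) f
  or t^m (x) e with m = |B Int {j..R}|, placed according to the first element q >= j of B and
  coloured f iff eps(q) = 1. Because pi is noncrossing, the factor of the block of j-1 is always
  the first one, so A*, D* open a block, M, M* raise its exponent, and A, D close it, producing its
  moment; the colours match because eps alternates along blocks. Since 1 and R lie in one block,
  that block stays open throughout, so A and D never meet a one-letter tensor, where they would
  vanish for lack of a vacuum.

  The hypotheses iota(R) = k and R >= 1 are implied by
  the others.
*)

lemma cyc_alt_singleton: "\<not> cyc_alt [x]"
  by (simp add: cyc_alt_def)

lemma cyc_alt_consecutive: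
  assumes "cyc_alt (xs @ a # b # ys)"
  shows "a \<noteq> b"
proof -
  let ?es = "xs @ a # b # ys"
  have "Suc (length xs) mod length ?es = Suc (length xs)" by simp
  moreover have "length xs < length ?es" by simp
  ultimately have "?es ! length xs \<noteq> ?es ! Suc (length xs)"
    using assms unfolding cyc_alt_def by (metis Suc_eq_plus1)
  then show ?thesis by (simp add: nth_append)
qed

lemma sorted_list_of_set_insert_less:
  fixes A :: "'a::linorder set"
  assumes "finite A" and "\<forall>x\<in>A. a < x"
  shows "sorted_list_of_set (insert a A) = a # sorted_list_of_set A"
proof -
  have "a \<notin> A" using assms(2) by blast
  then show ?thesis
    using assms by (simp add: sorted_list_of_set_insert insort_is_Cons less_imp_le)
qed

lemma sorted_list_of_set_split_consecutive:
  fixes B :: "'a::linorder set"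
  assumes "finite B" and "a \<in> B" and "b \<in> B" and "a < b" and "\<forall>x\<in>B. x \<le> a \<or> b \<le> x"
  shows "sorted_list_of_set B =
    sorted_list_of_set {x\<in>B. x < a} @ a # b # sorted_list_of_set {x\<in>B. b < x}"
proof (rule sorted_distinct_set_unique)
  have "B = {x\<in>B. x < a} \<union> {a, b} \<union> {x\<in>B. b < x}"
    using assms by force
  then show "set (sorted_list_of_set B) =
      set (sorted_list_of_set {x\<in>B. x < a} @ a # b # sorted_list_of_set {x\<in>B. b < x})"
    using assms(1) by auto
qed (use assms in \<open>auto simp: sorted_append\<close>)

lemma app_single: "app T [(c, u)] = map (\<lambda>(b, u'). (c * b, u')) (T u)"
  by (simp add: app_def)

lemma integral_idf_power: "(LINT t|M. idf t ^ n) = complex_of_real (LINT t|M. t ^ n)"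
proof -
  have "(\<lambda>t. idf t ^ n) = (\<lambda>t. complex_of_real (t ^ n))"
    by (simp add: idf_def)
  then show ?thesis
    by (simp only:) (rule integral_complex_of_real)
qed

lemma linner_power_idf:
  "linner \<sigma> (k, c, \<lambda>t. idf t ^ m) (k, c, idf) = complex_of_real (LINT t|\<sigma> k. t ^ Suc m)"
proof -
  have "(\<lambda>t. idf t ^ m * cnj (idf t)) = (\<lambda>t. complex_of_real (t ^ Suc m))"
    by (simp add: idf_def mult.commute)
  then have "(LINT t|\<sigma> k. idf t ^ m * cnj (idf t)) = complex_of_real (LINT t|\<sigma> k. t ^ Suc m)"
    by (simp only:) (rule integral_complex_of_real)
  then show ?thesis
    by (simp add: linner_def)
qed

lemma finner_single_eta: "finner \<sigma> [(a, [(k, c, F)])] (eta k) = a * (LINT t|\<sigma> k. F t)"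
  by (cases c) (simp_all add: finner_def eta_def winner_def linner_def)

definition next_in_blk :: "nat set set \<Rightarrow> nat \<Rightarrow> nat" where
  "next_in_blk \<pi> p = Min {q \<in> blk \<pi> p. p < q}"

(* The blocks meeting both {1..j-1} and {j..R}, each represented by its first element >= j. *)
definition open_pos :: "nat \<Rightarrow> nat set set \<Rightarrow> nat \<Rightarrow> nat set" where
  "open_pos R \<pi> j =
     {q \<in> {j..R}. (\<exists>a\<in>blk \<pi> q. a < j) \<and> (\<forall>q'\<in>blk \<pi> q. j \<le> q' \<longrightarrow> q \<le> q')}"

definition tail_card :: "nat set set \<Rightarrow> nat \<Rightarrow> nat \<Rightarrow> nat" where
  "tail_card \<pi> j q = card {q' \<in> blk \<pi> q. j \<le> q'}"

definition block_moment :: "(nat \<Rightarrow> real measure) \<Rightarrow> (nat \<Rightarrow> nat) \<Rightarrow> nat set \<Rightarrow> complex" where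
  "block_moment \<sigma> \<iota> B = complex_of_real (LINT t|\<sigma> (\<iota> (Min B)). t ^ card B)"

definition closed_moments ::
    "(nat \<Rightarrow> real measure) \<Rightarrow> (nat \<Rightarrow> nat) \<Rightarrow> nat set set \<Rightarrow> nat \<Rightarrow> complex" where
  "closed_moments \<sigma> \<iota> \<pi> j = (\<Prod>B \<in> {B \<in> \<pi>. j \<le> Min B}. block_moment \<sigma> \<iota> B)"

definition colour :: "epsilon \<Rightarrow> col" where
  "colour e = (case e of EOne \<Rightarrow> Cf | EStar \<Rightarrow> Ce)"

definition open_letter :: "nat set set \<Rightarrow> (nat \<Rightarrow> epsilon) \<Rightarrow> (nat \<Rightarrow> nat) \<Rightarrow> nat \<Rightarrow> nat \<Rightarrow> letter" where
  "open_letter \<pi> \<epsilon> \<iota> j q = (\<iota> q, colour (\<epsilon> q), \<lambda>t. idf t ^ tail_card \<pi> j q)"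

definition open_word :: "nat \<Rightarrow> nat set set \<Rightarrow> (nat \<Rightarrow> epsilon) \<Rightarrow> (nat \<Rightarrow> nat) \<Rightarrow> nat \<Rightarrow> word" where
  "open_word R \<pi> \<epsilon> \<iota> j = map (open_letter \<pi> \<epsilon> \<iota> j) (sorted_list_of_set (open_pos R \<pi> j))"

locale noncrossing_partition =
  fixes R :: nat and \<pi> :: "nat set set"
  assumes NC: "NC R \<pi>"
begin

lemma partition: "partition_on {1..R} \<pi>"
  using NC by (simp add: NC_def)

lemma noncrossing:
  assumes "B \<in> \<pi>" "B' \<in> \<pi>" "B \<noteq> B'" "a < b" "b < c" "c < d" "a \<in> B" "c \<in> B" "b \<in> B'" "d \<in> B'"
  shows False
  using NC assms unfolding NC_def by blast

lemma finite_partition: "finite \<pi>"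
  using partition by (metis finite_UnionD finite_atLeastAtMost partition_onD1)

lemma block_subset: "B \<in> \<pi> \<Longrightarrow> B \<subseteq> {1..R}"
  using partition partition_onD1 by blast

lemma finite_block: "B \<in> \<pi> \<Longrightarrow> finite B"
  using block_subset finite_subset by blast

lemma block_nonempty: "B \<in> \<pi> \<Longrightarrow> B \<noteq> {}"
  using partition partition_onD3 by blast

lemma blk_eqI: "B \<in> \<pi> \<Longrightarrow> q \<in> B \<Longrightarrow> blk \<pi> q = B"
  unfolding blk_def using partition
  by (intro the_equality) (auto dest: partition_onD2 disjointD)

lemma
  assumes "q \<in> {1..R}"
  shows blk_in_partition: "blk \<pi> q \<in> \<pi>" and mem_blk: "q \<in> blk \<pi> q"
proof -
  obtain B where "B \<in> \<pi>" "q \<in> B"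
    using assms partition partition_onD1 by blast
  then show "blk \<pi> q \<in> \<pi>" "q \<in> blk \<pi> q"
    using blk_eqI by auto
qed

lemma blk_eq_iff: "p \<in> {1..R} \<Longrightarrow> q \<in> {1..R} \<Longrightarrow> p \<in> blk \<pi> q \<longleftrightarrow> blk \<pi> p = blk \<pi> q"
  by (metis blk_eqI blk_in_partition mem_blk)

lemma
  assumes "p \<in> {1..R}" and "p \<noteq> Max (blk \<pi> p)"
  shows next_in_blk_mem: "next_in_blk \<pi> p \<in> blk \<pi> p"
    and less_next_in_blk: "p < next_in_blk \<pi> p"
    and next_in_blk_le: "\<And>x. x \<in> blk \<pi> p \<Longrightarrow> p < x \<Longrightarrow> next_in_blk \<pi> p \<le> x"
proof -
  let ?B = "blk \<pi> p"
  have fin: "finite ?B" using assms(1) blk_in_partition finite_block by blast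
  then have "Max ?B \<in> ?B" "p \<le> Max ?B"
    using assms(1) mem_blk by (auto intro: Max_in)
  then have "{q \<in> ?B. p < q} \<noteq> {}" using assms(2) by force
  then show "next_in_blk \<pi> p \<in> ?B" "p < next_in_blk \<pi> p"
    using Min_in[of "{q \<in> ?B. p < q}"] fin unfolding next_in_blk_def by auto
  show "next_in_blk \<pi> p \<le> x" if "x \<in> ?B" "p < x" for x
    using that fin unfolding next_in_blk_def by (simp add: Min_le)
qed

lemma open_pos_subset: "open_pos R \<pi> j \<subseteq> {j..R}"
  by (auto simp: open_pos_def)

lemma finite_open_pos: "finite (open_pos R \<pi> j)"
  using open_pos_subset finite_subset by blast

lemma open_pos_eq:
  assumes p: "p \<in> {1..R}"
  shows "open_pos R \<pi> p =
    (if p = Min (blk \<pi> p) then {} else {p}) \<union> (open_pos R \<pi> (Suc p) - blk \<pi> p)"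
proof -
  let ?B = "blk \<pi> p"
  have fin: "finite ?B" and "p \<in> ?B"
    using p blk_in_partition finite_block mem_blk by blast+
  then have "(\<exists>a\<in>?B. a < p) \<longleftrightarrow> p \<noteq> Min ?B"
    using Min_le[OF fin] Min_in[OF fin] by (metis empty_iff le_neq_implies_less not_le)
  then have self: "p \<in> open_pos R \<pi> p \<longleftrightarrow> p \<noteq> Min ?B"
    using p by (auto simp: open_pos_def)
  have same_block: "q \<notin> open_pos R \<pi> p" if "q \<in> ?B" "q \<noteq> p" for q
  proof
    assume "q \<in> open_pos R \<pi> p"
    moreover have "blk \<pi> q = ?B"
      using that p blk_eqI blk_in_partition by blast
    ultimately have "q \<le> p"
      using \<open>p \<in> ?B\<close> unfolding open_pos_def by auto
    then show False
      using \<open>q \<in> open_pos R \<pi> p\<close> \<open>q \<noteq> p\<close> open_pos_subset by fastforce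
  qed
  have other_block: "q \<in> open_pos R \<pi> p \<longleftrightarrow> q \<in> open_pos R \<pi> (Suc p)"
    if "q \<notin> ?B" "q \<noteq> p" for q
  proof -
    have "p \<notin> blk \<pi> q" if "q \<in> {1..R}"
      using that \<open>q \<notin> ?B\<close> p blk_eq_iff mem_blk by metis
    then show ?thesis
      using \<open>q \<noteq> p\<close> by (auto simp: open_pos_def Suc_le_eq less_Suc_eq)
  qed
  show ?thesis
  proof (rule set_eqI)
    fix q
    show "q \<in> open_pos R \<pi> p \<longleftrightarrow>
        q \<in> (if p = Min ?B then {} else {p}) \<union> (open_pos R \<pi> (Suc p) - ?B)"
      using self same_block[of q] other_block[of q] \<open>p \<in> ?B\<close>
      by (cases "q = p"; cases "q \<in> ?B") auto
  qed
qed

lemma open_pos_Suc_Int_blk: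
  assumes p: "p \<in> {1..R}"
  shows "open_pos R \<pi> (Suc p) \<inter> blk \<pi> p =
    (if p = Max (blk \<pi> p) then {} else {next_in_blk \<pi> p})"
proof -
  let ?B = "blk \<pi> p"
  have B: "?B \<in> \<pi>" "p \<in> ?B" "finite ?B"
    using p blk_in_partition mem_blk finite_block by blast+
  have "q \<in> open_pos R \<pi> (Suc p) \<longleftrightarrow> q \<le> R \<and> p < q \<and> (\<forall>x\<in>?B. p < x \<longrightarrow> q \<le> x)"
    if "q \<in> ?B" for q
    using that B blk_eqI[of ?B q] by (auto simp: open_pos_def Suc_le_eq less_Suc_eq_le)
  moreover have "\<not> p < q" if "q \<in> ?B" "p = Max ?B" for q
    using that Max_ge[OF B(3)] by (simp add: not_less)
  moreover have "q \<le> R" if "q \<in> ?B" for q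
    using that block_subset[OF B(1)] by auto
  ultimately show ?thesis
    using next_in_blk_mem[OF p] less_next_in_blk[OF p] next_in_blk_le[OF p]
    by (auto intro: antisym)
qed

(* The one place where noncrossingness is used. *)
lemma next_in_blk_less_open_pos:
  assumes p: "p \<in> {1..R}" and pmax: "p \<noteq> Max (blk \<pi> p)"
    and q: "q \<in> open_pos R \<pi> (Suc p) - blk \<pi> p"
  shows "next_in_blk \<pi> p < q"
proof (rule ccontr)
  assume "\<not> next_in_blk \<pi> p < q"
  moreover have "next_in_blk \<pi> p \<noteq> q"
    using q next_in_blk_mem[OF p pmax] by auto
  ultimately have q_less: "q < next_in_blk \<pi> p" by simp
  have qR: "q \<in> {1..R}" and "p < q"
    using q open_pos_subset p by fastforce+
  obtain a where a: "a \<in> blk \<pi> q" "a < Suc p"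
    using q by (auto simp: open_pos_def)
  have blocks_differ: "blk \<pi> q \<noteq> blk \<pi> p"
    using q qR mem_blk by force
  then have "a \<noteq> p"
    using a(1) p qR blk_eq_iff by blast
  with a have "a < p" by simp
  show False
    by (rule noncrossing[OF blk_in_partition[OF qR] blk_in_partition[OF p] blocks_differ
          \<open>a < p\<close> \<open>p < q\<close> q_less a(1) mem_blk[OF qR] mem_blk[OF p] next_in_blk_mem[OF p pmax]])
qed

lemma tail_card_Suc: "p \<notin> blk \<pi> q \<Longrightarrow> tail_card \<pi> p q = tail_card \<pi> (Suc p) q"
proof -
  assume "p \<notin> blk \<pi> q"
  then have "{q' \<in> blk \<pi> q. p \<le> q'} = {q' \<in> blk \<pi> q. Suc p \<le> q'}"
    by (auto simp: Suc_le_eq le_less)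
  then show ?thesis by (simp add: tail_card_def)
qed

lemma tail_card_self:
  assumes p: "p \<in> {1..R}"
  shows "tail_card \<pi> p p =
    (if p = Max (blk \<pi> p) then 1 else Suc (tail_card \<pi> (Suc p) (next_in_blk \<pi> p)))"
proof -
  let ?B = "blk \<pi> p"
  have B: "p \<in> ?B" "finite ?B"
    using p blk_in_partition mem_blk finite_block by blast+
  have split: "{q \<in> ?B. p \<le> q} = insert p {q \<in> ?B. Suc p \<le> q}"
    using B by auto
  show ?thesis
  proof (cases "p = Max ?B")
    case True
    have "x \<le> p" if "x \<in> ?B" for x
      using Max_ge[OF B(2) that] True by linarith
    then have empty: "{q \<in> ?B. Suc p \<le> q} = {}"
      by (auto simp: Suc_le_eq not_less)
    show ?thesis
      unfolding tail_card_def split empty using True by simp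
  next
    case False
    have "blk \<pi> (next_in_blk \<pi> p) = ?B"
      using p False blk_eqI blk_in_partition next_in_blk_mem by blast
    then show ?thesis
      using False split B by (simp add: tail_card_def)
  qed
qed

lemma tail_card_Min:
  assumes "p \<in> {1..R}" and "p = Min (blk \<pi> p)"
  shows "tail_card \<pi> p p = card (blk \<pi> p)"
proof -
  have "finite (blk \<pi> p)"
    using assms(1) blk_in_partition finite_block by blast
  then have "p \<le> q" if "q \<in> blk \<pi> p" for q
    using Min_le that assms(2) by metis
  then have "{q \<in> blk \<pi> p. p \<le> q} = blk \<pi> p"
    by auto
  then show ?thesis by (simp add: tail_card_def)
qed

lemma Min_block_mem: "B \<in> \<pi> \<Longrightarrow> Min B \<in> B"
  using finite_block block_nonempty Min_in by blast

lemma closed_moments_eq: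
  assumes p: "p \<in> {1..R}"
  shows "closed_moments \<sigma> \<iota> \<pi> p =
    (if p = Min (blk \<pi> p)
     then block_moment \<sigma> \<iota> (blk \<pi> p) * closed_moments \<sigma> \<iota> \<pi> (Suc p)
     else closed_moments \<sigma> \<iota> \<pi> (Suc p))"
proof -
  let ?B = "blk \<pi> p"
  have Min_eq_blk: "B = ?B" if "B \<in> \<pi>" "Min B = p" for B
    using blk_eqI[OF that(1) Min_block_mem[OF that(1)]] that(2) by simp
  have split: "{B \<in> \<pi>. p \<le> Min B} = {B \<in> \<pi>. Min B = p} \<union> {B \<in> \<pi>. Suc p \<le> Min B}"
    by auto
  show ?thesis
  proof (cases "p = Min ?B")
    case True
    have "{B \<in> \<pi>. Min B = p} = {?B}"
      using Min_eq_blk blk_in_partition[OF p] True[symmetric] by blast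
    then have "{B \<in> \<pi>. p \<le> Min B} = insert ?B {B \<in> \<pi>. Suc p \<le> Min B}"
      unfolding split by simp
    then show ?thesis
      using True[symmetric] finite_partition by (simp add: closed_moments_def)
  next
    case False
    have "{B \<in> \<pi>. p \<le> Min B} = {B \<in> \<pi>. Suc p \<le> Min B}"
      using split Min_eq_blk False by auto
    then show ?thesis
      using False by (simp add: closed_moments_def)
  qed
qed

lemma closed_moments_1: "closed_moments \<sigma> \<iota> \<pi> 1 = (\<Prod>B\<in>\<pi>. block_moment \<sigma> \<iota> B)"
proof -
  have "{B \<in> \<pi>. 1 \<le> Min B} = \<pi>"
    using Min_block_mem block_subset by fastforce
  then show ?thesis by (simp add: closed_moments_def)
qed

lemma closed_moments_Suc_R: "closed_moments \<sigma> \<iota> \<pi> (Suc R) = 1"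
proof -
  have "{B \<in> \<pi>. Suc R \<le> Min B} = {}"
    using Min_block_mem block_subset by fastforce
  then show ?thesis
    unfolding closed_moments_def by (metis prod.empty)
qed

lemma open_pos_Suc_gt: "q \<in> open_pos R \<pi> (Suc p) \<Longrightarrow> p < q"
  using open_pos_subset by fastforce

lemma sorted_open_pos:
  assumes p: "p \<in> {1..R}"
  shows "sorted_list_of_set (open_pos R \<pi> p) =
    (if p = Min (blk \<pi> p) then [] else [p]) @ sorted_list_of_set (open_pos R \<pi> (Suc p) - blk \<pi> p)"
proof (cases "p = Min (blk \<pi> p)")
  case True
  then show ?thesis
    using open_pos_eq[OF p] by simp
next
  case False
  then have "open_pos R \<pi> p = insert p (open_pos R \<pi> (Suc p) - blk \<pi> p)"
    using open_pos_eq[OF p] by simp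
  then show ?thesis
    using False finite_open_pos open_pos_Suc_gt
    by (simp add: sorted_list_of_set_insert_less del: sorted_list_of_set_insert_remove)
qed

lemma sorted_open_pos_Suc:
  assumes p: "p \<in> {1..R}"
  shows "sorted_list_of_set (open_pos R \<pi> (Suc p)) =
    (if p = Max (blk \<pi> p) then [] else [next_in_blk \<pi> p])
      @ sorted_list_of_set (open_pos R \<pi> (Suc p) - blk \<pi> p)"
proof -
  have split: "open_pos R \<pi> (Suc p) =
      (open_pos R \<pi> (Suc p) \<inter> blk \<pi> p) \<union> (open_pos R \<pi> (Suc p) - blk \<pi> p)"
    by blast
  show ?thesis
  proof (cases "p = Max (blk \<pi> p)")
    case True
    then show ?thesis
      using split open_pos_Suc_Int_blk[OF p] by simp
  next
    case False
    then have eq: "insert (next_in_blk \<pi> p) (open_pos R \<pi> (Suc p) - blk \<pi> p) = open_pos R \<pi> (Suc p)"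
      using split open_pos_Suc_Int_blk[OF p] by simp
    have "sorted_list_of_set (insert (next_in_blk \<pi> p) (open_pos R \<pi> (Suc p) - blk \<pi> p)) =
        next_in_blk \<pi> p # sorted_list_of_set (open_pos R \<pi> (Suc p) - blk \<pi> p)"
      using False next_in_blk_less_open_pos[OF p] finite_open_pos
      by (simp add: sorted_list_of_set_insert_less del: sorted_list_of_set_insert_remove)
    then show ?thesis
      using False by (simp only: eq) simp
  qed
qed

lemma open_word_eq:
  assumes p: "p \<in> {1..R}"
  shows "open_word R \<pi> \<epsilon> \<iota> p =
    (if p = Min (blk \<pi> p) then [] else [open_letter \<pi> \<epsilon> \<iota> p p])
      @ map (open_letter \<pi> \<epsilon> \<iota> (Suc p)) (sorted_list_of_set (open_pos R \<pi> (Suc p) - blk \<pi> p))"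
proof -
  have "open_letter \<pi> \<epsilon> \<iota> p q = open_letter \<pi> \<epsilon> \<iota> (Suc p) q"
    if "q \<in> open_pos R \<pi> (Suc p) - blk \<pi> p" for q
  proof -
    have q: "q \<in> {1..R}" "q \<notin> blk \<pi> p"
      using that open_pos_subset p by fastforce+
    then have "p \<notin> blk \<pi> q"
      using blk_eq_iff[OF p q(1)] mem_blk[OF q(1)] by auto
    then show ?thesis
      by (simp add: open_letter_def tail_card_Suc)
  qed
  then show ?thesis
    unfolding open_word_def sorted_open_pos[OF p] using finite_open_pos by simp
qed

lemma open_word_Suc_eq:
  assumes p: "p \<in> {1..R}"
  shows "open_word R \<pi> \<epsilon> \<iota> (Suc p) =
    (if p = Max (blk \<pi> p) then [] else [open_letter \<pi> \<epsilon> \<iota> (Suc p) (next_in_blk \<pi> p)])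
      @ map (open_letter \<pi> \<epsilon> \<iota> (Suc p)) (sorted_list_of_set (open_pos R \<pi> (Suc p) - blk \<pi> p))"
  unfolding open_word_def sorted_open_pos_Suc[OF p] by simp

end

locale alternating_partition = noncrossing_partition +
  fixes \<epsilon> :: "nat \<Rightarrow> epsilon" and \<iota> :: "nat \<Rightarrow> nat"
  assumes block_coloured:
    "\<forall>B\<in>\<pi>. (\<forall>q\<in>B. \<iota> q = \<iota> (Min B)) \<and> cyc_alt (map \<epsilon> (sorted_list_of_set B))"
begin

lemma iota_blk:
  assumes p: "p \<in> {1..R}" and q: "q \<in> blk \<pi> p"
  shows "\<iota> q = \<iota> p"
proof -
  have "\<forall>q\<in>blk \<pi> p. \<iota> q = \<iota> (Min (blk \<pi> p))"
    using block_coloured blk_in_partition[OF p] by blast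
  then show ?thesis
    using q mem_blk[OF p] by simp
qed

lemma two_le_card_block:
  assumes B: "B \<in> \<pi>"
  shows "2 \<le> card B"
proof (rule ccontr)
  assume "\<not> 2 \<le> card B"
  moreover have "0 < card B"
    using B finite_block block_nonempty by (simp add: card_gt_0_iff)
  ultimately have "card B = 1"
    by linarith
  then obtain x where "B = {x}"
    by (rule card_1_singletonE)
  moreover have "cyc_alt (map \<epsilon> (sorted_list_of_set B))"
    using B block_coloured by blast
  ultimately show False
    using cyc_alt_singleton by simp
qed

lemma Min_less_Max_block:
  assumes B: "B \<in> \<pi>"
  shows "Min B < Max B"
proof (rule ccontr)
  assume "\<not> Min B < Max B"
  then have "x = Min B" if "x \<in> B" for x
    using Min_le[OF finite_block[OF B] that] Max_ge[OF finite_block[OF B] that] by linarith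
  then have "B \<subseteq> {Min B}"
    by blast
  then have "card B \<le> 1"
    using card_mono[of "{Min B}" B] by simp
  then show False
    using two_le_card_block[OF B] by simp
qed

lemma epsilon_next_in_blk:
  assumes p: "p \<in> {1..R}" and pmax: "p \<noteq> Max (blk \<pi> p)"
  shows "\<epsilon> (next_in_blk \<pi> p) \<noteq> \<epsilon> p"
proof -
  let ?B = "blk \<pi> p" and ?n = "next_in_blk \<pi> p"
  have gap: "\<forall>x\<in>?B. x \<le> p \<or> ?n \<le> x"
    using next_in_blk_le[OF p pmax] not_le by blast
  have "cyc_alt (map \<epsilon> (sorted_list_of_set ?B))"
    using block_coloured blk_in_partition[OF p] by blast
  then have "cyc_alt (map \<epsilon> (sorted_list_of_set {x\<in>?B. x < p}) @ \<epsilon> p # \<epsilon> ?n #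
      map \<epsilon> (sorted_list_of_set {x\<in>?B. ?n < x}))"
    using sorted_list_of_set_split_consecutive[OF _ mem_blk[OF p] next_in_blk_mem[OF p pmax]
        less_next_in_blk[OF p pmax] gap] finite_block blk_in_partition[OF p]
    by simp
  then show ?thesis
    using cyc_alt_consecutive by metis
qed

lemma kappa_pi_eq_prod_block_moment:
  assumes iota_range: "\<forall>j\<in>{1..R}. \<iota> j \<in> I"
    and cumulants: "\<forall>i\<in>I. \<forall>es. es \<noteq> [] \<and> cyc_alt es \<longrightarrow>
        \<kappa> (map (Xpow st (X i)) es) = complex_of_real (LINT t|\<sigma> i. t ^ length es)"
  shows "kappa_pi \<kappa> \<pi> (\<lambda>j. Xpow st (X (\<iota> j)) (\<epsilon> j)) = (\<Prod>B\<in>\<pi>. block_moment \<sigma> \<iota> B)"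
  unfolding kappa_pi_def
proof (rule prod.cong[OF refl])
  fix B assume B: "B \<in> \<pi>"
  let ?es = "map \<epsilon> (sorted_list_of_set B)"
  have map_eq: "map (\<lambda>j. Xpow st (X (\<iota> j)) (\<epsilon> j)) (sorted_list_of_set B) =
      map (Xpow st (X (\<iota> (Min B)))) ?es"
    using B block_coloured finite_block by simp
  have "\<iota> (Min B) \<in> I"
    using iota_range Min_block_mem[OF B] block_subset[OF B] by blast
  moreover have "?es \<noteq> []" "cyc_alt ?es"
    using B block_coloured finite_block block_nonempty by auto
  ultimately have "\<kappa> (map (Xpow st (X (\<iota> (Min B)))) ?es) =
      complex_of_real (LINT t|\<sigma> (\<iota> (Min B)). t ^ length ?es)"
    using cumulants by blast
  then show "\<kappa> (map (\<lambda>j. Xpow st (X (\<iota> j)) (\<epsilon> j)) (sorted_list_of_set B)) =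
      block_moment \<sigma> \<iota> B"
    unfolding map_eq block_moment_def using finite_block[OF B] by simp
qed

end

locale irreducible_alternating_partition = alternating_partition +
  assumes irreducible: "\<exists>B\<in>\<pi>. 1 \<in> B \<and> R \<in> B"
begin

lemma
  shows R_mem_blk_1: "R \<in> blk \<pi> 1"
    and Min_blk_1: "Min (blk \<pi> 1) = 1"
    and Max_blk_1: "Max (blk \<pi> 1) = R"
    and two_le_R: "2 \<le> R"
proof -
  obtain B where B: "B \<in> \<pi>" "1 \<in> B" "R \<in> B"
    using irreducible by blast
  then have blk1: "blk \<pi> 1 = B"
    using blk_eqI by blast
  then show "R \<in> blk \<pi> 1"
    using B by simp
  show Min: "Min (blk \<pi> 1) = 1" and Max: "Max (blk \<pi> 1) = R"
    unfolding blk1 using B block_subset[OF B(1)] finite_block[OF B(1)]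
    by (auto intro!: Min_eqI Max_eqI)
  show "2 \<le> R"
    using Min_less_Max_block[OF B(1)] Min Max blk1 by simp
qed

lemma blk_1_in_partition: "blk \<pi> 1 \<in> \<pi>"
  using two_le_R blk_in_partition by simp

lemma open_pos_Int_blk_1_nonempty:
  assumes "1 < j" and "j \<le> R"
  shows "open_pos R \<pi> j \<inter> blk \<pi> 1 \<noteq> {}"
proof -
  let ?O = "blk \<pi> 1"
  let ?m = "Min {q \<in> ?O. j \<le> q}"
  have fin: "finite {q \<in> ?O. j \<le> q}"
    using finite_block[OF blk_1_in_partition] by simp
  moreover have "R \<in> {q \<in> ?O. j \<le> q}"
    using R_mem_blk_1 assms(2) by simp
  ultimately have m: "?m \<in> ?O" "j \<le> ?m"
    using Min_in by fastforce+
  then have "blk \<pi> ?m = ?O" "?m \<le> R"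
    using blk_eqI[OF blk_1_in_partition] block_subset[OF blk_1_in_partition] by auto
  moreover have "1 \<in> ?O"
    using mem_blk two_le_R by simp
  ultimately have "?m \<in> open_pos R \<pi> j"
    using m assms(1) Min_le[OF fin] by (auto simp: open_pos_def)
  then show ?thesis
    using m(1) by blast
qed

lemma open_pos_Suc_diff_blk_nonempty:
  assumes "2 \<le> p" and "p < R" and "p = Min (blk \<pi> p)"
  shows "open_pos R \<pi> (Suc p) - blk \<pi> p \<noteq> {}"
proof -
  have p: "p \<in> {1..R}"
    using assms(1,2) by simp
  have "blk \<pi> 1 \<noteq> blk \<pi> p"
    using assms(1) assms(3)[symmetric] Min_blk_1 by auto
  then have "blk \<pi> 1 \<inter> blk \<pi> p = {}"
    using blk_eqI[OF blk_1_in_partition] blk_eqI[OF blk_in_partition[OF p]] by blast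
  then show ?thesis
    using open_pos_Int_blk_1_nonempty[of "Suc p"] assms(1,2) by auto
qed

lemma open_pos_R: "open_pos R \<pi> R = {R}"
proof -
  have "R \<noteq> Min (blk \<pi> R)"
    using blk_eqI[OF blk_1_in_partition R_mem_blk_1] Min_blk_1 two_le_R by simp
  moreover have "open_pos R \<pi> (Suc R) = {}"
    using open_pos_subset by fastforce
  ultimately show ?thesis
    using open_pos_eq[of R] two_le_R by simp
qed

lemma open_pos_2: "open_pos R \<pi> 2 = {next_in_blk \<pi> 1}"
proof -
  have one: "(1::nat) \<in> {1..R}"
    using two_le_R by simp
  have "open_pos R \<pi> 1 = {}"
    using blk_in_partition block_subset by (fastforce simp: open_pos_def)
  then have "open_pos R \<pi> 2 \<subseteq> blk \<pi> 1"
    using open_pos_eq[OF one] by (auto simp: numeral_2_eq_2)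
  then have "open_pos R \<pi> 2 = open_pos R \<pi> (Suc 1) \<inter> blk \<pi> 1"
    by (auto simp: numeral_2_eq_2)
  also have "\<dots> = {next_in_blk \<pi> 1}"
    using open_pos_Suc_Int_blk[OF one] Max_blk_1 two_le_R by simp
  finally show ?thesis .
qed

lemma phi_step:
  assumes "2 \<le> p" and "p < R"
  shows "app (phi \<sigma> R \<epsilon> \<iota> \<pi> p) [(closed_moments \<sigma> \<iota> \<pi> (Suc p), open_word R \<pi> \<epsilon> \<iota> (Suc p))] =
    [(closed_moments \<sigma> \<iota> \<pi> p, open_word R \<pi> \<epsilon> \<iota> p)]"
proof -
  let ?B = "blk \<pi> p" and ?n = "next_in_blk \<pi> p"
  let ?rest = "map (open_letter \<pi> \<epsilon> \<iota> (Suc p)) (sorted_list_of_set (open_pos R \<pi> (Suc p) - ?B))"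
  have p: "p \<in> {1..R}"
    using assms by simp
  have phi: "phi \<sigma> R \<epsilon> \<iota> \<pi> p =
      (if \<epsilon> p = EOne
       then (if p = Min ?B then opD \<sigma> (\<iota> p) else if p = Max ?B then opAstar (\<iota> p) else opM (\<iota> p))
       else (if p = Min ?B then opA \<sigma> (\<iota> p) else if p = Max ?B then opDstar (\<iota> p) else opMstar (\<iota> p)))"
    using assms by (simp add: phi_def)
  consider (last) "p = Max ?B" | (first) "p = Min ?B" "p \<noteq> Max ?B" | (inner) "p \<noteq> Min ?B" "p \<noteq> Max ?B"
    by blast
  then show ?thesis
  proof cases
    case last
    then have "p \<noteq> Min ?B"
      using Min_less_Max_block[OF blk_in_partition[OF p]] by simp
    moreover have "tail_card \<pi> p p = 1"
      using tail_card_self[OF p] last by simp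
    ultimately show ?thesis
      using last phi open_word_eq[OF p] open_word_Suc_eq[OF p] closed_moments_eq[OF p]
      by (cases "\<epsilon> p") (simp_all add: app_single opAstar_def opDstar_def open_letter_def colour_def)
  next
    case first
    have "?rest \<noteq> []"
      using open_pos_Suc_diff_blk_nonempty[OF assms first(1)] finite_open_pos by simp
    moreover have "card ?B = Suc (tail_card \<pi> (Suc p) ?n)"
      using tail_card_Min[OF p] tail_card_self[OF p] first by simp
    ultimately show ?thesis
      using first phi open_word_eq[OF p] open_word_Suc_eq[OF p] closed_moments_eq[OF p]
        iota_blk[OF p next_in_blk_mem[OF p first(2)]] epsilon_next_in_blk[OF p first(2)]
      by (cases "\<epsilon> p"; cases "\<epsilon> ?n")
        (simp_all add: app_single open_letter_def colour_def block_moment_def linner_power_idf mult.commute)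
  next
    case inner
    have "tail_card \<pi> p p = Suc (tail_card \<pi> (Suc p) ?n)"
      using tail_card_self[OF p] inner by simp
    then show ?thesis
      using inner phi open_word_eq[OF p] open_word_Suc_eq[OF p] closed_moments_eq[OF p]
        iota_blk[OF p next_in_blk_mem[OF p inner(2)]] epsilon_next_in_blk[OF p inner(2)]
      by (cases "\<epsilon> p"; cases "\<epsilon> ?n") (simp_all add: app_single open_letter_def colour_def)
  qed
qed

lemma phi_R_eta: "app (phi \<sigma> R \<epsilon> \<iota> \<pi> R) (eta (\<iota> R)) =
    [(closed_moments \<sigma> \<iota> \<pi> R, open_word R \<pi> \<epsilon> \<iota> R)]"
proof -
  have R: "R \<in> {1..R}"
    using two_le_R by simp
  have "blk \<pi> R = blk \<pi> 1"
    using blk_eqI[OF blk_1_in_partition R_mem_blk_1] .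
  then have "R \<noteq> Min (blk \<pi> R)" "R = Max (blk \<pi> R)"
    using Min_blk_1 Max_blk_1 two_le_R by simp_all
  then have "closed_moments \<sigma> \<iota> \<pi> R = 1" "tail_card \<pi> R R = 1"
    using closed_moments_eq[OF R] closed_moments_Suc_R tail_card_self[OF R] by simp_all
  then show ?thesis
    using two_le_R
    by (cases "\<epsilon> R") (simp_all add: phi_def open_word_def open_pos_R open_letter_def colour_def eta_def app_def)
qed

lemma phi_suffix_eta:
  assumes "2 \<le> j" and "j \<le> R"
  shows "foldr (\<lambda>j w. app (phi \<sigma> R \<epsilon> \<iota> \<pi> j) w) [j..<R+1] (eta (\<iota> R)) =
    [(closed_moments \<sigma> \<iota> \<pi> j, open_word R \<pi> \<epsilon> \<iota> j)]"
  using assms(2)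
proof (induction j rule: inc_induct)
  case base
  then show ?case
    using phi_R_eta by simp
next
  case (step n)
  then have "[n..<R+1] = n # [Suc n..<R+1]"
    by (simp add: upt_conv_Cons)
  then show ?case
    using step phi_step[of n] assms(1) by simp
qed

lemma finner_phi_prod_eta:
  "finner \<sigma> (phi_prod \<sigma> R \<epsilon> \<iota> \<pi> (eta (\<iota> 1))) (eta (\<iota> 1)) = (\<Prod>B\<in>\<pi>. block_moment \<sigma> \<iota> B)"
proof -
  let ?O = "blk \<pi> 1" and ?n = "next_in_blk \<pi> 1"
  have one: "(1::nat) \<in> {1..R}" and not_last: "1 \<noteq> Max ?O"
    using two_le_R Max_blk_1 by simp_all
  have "\<iota> R = \<iota> 1"
    using iota_blk[OF one R_mem_blk_1] .
  moreover have "[1..<R+1] = 1 # [2..<R+1]"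
    using two_le_R by (simp add: upt_conv_Cons numeral_2_eq_2)
  ultimately have prod: "phi_prod \<sigma> R \<epsilon> \<iota> \<pi> (eta (\<iota> 1)) =
      app (phi \<sigma> R \<epsilon> \<iota> \<pi> 1) [(closed_moments \<sigma> \<iota> \<pi> 2, open_word R \<pi> \<epsilon> \<iota> 2)]"
    using phi_suffix_eta[of 2] two_le_R by (simp add: phi_prod_def)
  have "open_word R \<pi> \<epsilon> \<iota> 2 = [(\<iota> 1, colour (\<epsilon> ?n), \<lambda>t. idf t ^ tail_card \<pi> 2 ?n)]"
    using iota_blk[OF one next_in_blk_mem[OF one not_last]]
    by (simp add: open_word_def open_pos_2 open_letter_def)
  moreover have "card ?O = Suc (tail_card \<pi> 2 ?n)"
    using tail_card_Min[OF one] tail_card_self[OF one] Min_blk_1 not_last by (simp add: numeral_2_eq_2)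
  ultimately have "app (phi \<sigma> R \<epsilon> \<iota> \<pi> 1) [(closed_moments \<sigma> \<iota> \<pi> 2, open_word R \<pi> \<epsilon> \<iota> 2)] =
      [(closed_moments \<sigma> \<iota> \<pi> 2, [(\<iota> 1, colour (\<epsilon> 1), \<lambda>t. idf t ^ card ?O)])]"
    using epsilon_next_in_blk[OF one not_last]
    by (cases "\<epsilon> 1"; cases "\<epsilon> ?n") (simp_all add: phi_def app_single colour_def)
  then have "finner \<sigma> (phi_prod \<sigma> R \<epsilon> \<iota> \<pi> (eta (\<iota> 1))) (eta (\<iota> 1)) =
      closed_moments \<sigma> \<iota> \<pi> 2 * (LINT t|\<sigma> (\<iota> 1). idf t ^ card ?O)"
    unfolding prod by (simp add: finner_single_eta)
  also have "\<dots> = block_moment \<sigma> \<iota> ?O * closed_moments \<sigma> \<iota> \<pi> 2"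
    unfolding block_moment_def Min_blk_1 by (simp add: integral_idf_power)
  also have "\<dots> = closed_moments \<sigma> \<iota> \<pi> 1"
    using closed_moments_eq[OF one] Min_blk_1 by (simp add: numeral_2_eq_2)
  finally show ?thesis
    unfolding closed_moments_1 .
qed

end

theorem lemma4p2:
  fixes sc :: "complex \<Rightarrow> 'a::ring_1" and st :: "'a \<Rightarrow> 'a" and \<tau> :: "'a \<Rightarrow> complex"
    and \<kappa> :: "'a list \<Rightarrow> complex"
    and N :: nat and X :: "nat \<Rightarrow> 'a" and \<sigma> :: "nat \<Rightarrow> real measure"
    and R k :: nat and \<epsilon> :: "nat \<Rightarrow> epsilon" and \<iota> :: "nat \<Rightarrow> nat" and \<pi> :: "nat set set"
  assumes space: "tracial_star_prob_space sc st \<tau>"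
    and cum: "free_cumulants \<tau> \<kappa>"
    and free: "star_free sc st \<tau> N X"
    and Rdiag: "\<forall>i\<in>{1..N}. R_diagonal st \<kappa> (X i)"
    and sigma_sets: "\<forall>i\<in>{1..N}. sets (\<sigma> i) = sets borel"
    and sigma_fin: "\<forall>i\<in>{1..N}. finite_measure (\<sigma> i)"
    and sigma_cpt: "\<forall>i\<in>{1..N}. \<exists>S. compact S \<and> emeasure (\<sigma> i) (- S) = 0"
    and sigma_sym: "\<forall>i\<in>{1..N}. \<forall>A\<in>sets borel. emeasure (\<sigma> i) (uminus ` A) = emeasure (\<sigma> i) A"
    and cum_sigma: "\<forall>i\<in>{1..N}. \<forall>es. es \<noteq> [] \<and> cyc_alt es \<longrightarrow>
        \<kappa> (map (Xpow st (X i)) es) = complex_of_real (LINT t|\<sigma> i. t ^ length es)"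
    and R_pos: "R \<ge> 1"
    and iota_range: "\<forall>j\<in>{1..R}. \<iota> j \<in> {1..N}"
    and iota1: "\<iota> 1 = k" and iotaR: "\<iota> R = k"
    and irr: "NC_irr R \<pi>"
    and blocks: "\<forall>B\<in>\<pi>. (\<forall>q\<in>B. \<iota> q = \<iota> (Min B)) \<and> cyc_alt (map \<epsilon> (sorted_list_of_set B))"
  shows "kappa_pi \<kappa> \<pi> (\<lambda>j. Xpow st (X (\<iota> j)) (\<epsilon> j))
           = finner \<sigma> (phi_prod \<sigma> R \<epsilon> \<iota> \<pi> (eta k)) (eta k)"
proof -
  interpret irreducible_alternating_partition R \<pi> \<epsilon> \<iota>
    using irr blocks by unfold_locales (simp_all add: NC_irr_def)
  have "kappa_pi \<kappa> \<pi> (\<lambda>j. Xpow st (X (\<iota> j)) (\<epsilon> j)) = (\<Prod>B\<in>\<pi>. block_moment \<sigma> \<iota> B)"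
    using iota_range cum_sigma by (rule kappa_pi_eq_prod_block_moment)
  also have "\<dots> = finner \<sigma> (phi_prod \<sigma> R \<epsilon> \<iota> \<pi> (eta k)) (eta k)"
    using finner_phi_prod_eta iota1 by simp
  finally show ?thesis .
qed

end
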